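(* Let $\lambda$ be a dominant integral weight of $\mathfrak{sl}_{r+1}$, write $\lambda+\rho=(\ell_1>\ell_2>\cdots>\ell_r>\ell_{r+1}=0)$, and let $b\in\mathcal B(\lambda+\rho)$ with BZL path $\psi_{\mathbf i}(b)=(a_1,\dots,a_N)$. Let $1\le k\le N$ and suppose that $a_k=a_{j,j-i+1}$ in triangular indexing, where $1\le i\le j\le r$ (so that $i_k=i$ and $a_k=\mathbf a_{i,j}$). Put $b'=\tilde e_{i_{k-1}}^{a_{k-1}}\cdots\tilde e_{i_1}^{a_1}b$. Then $\ell_i-\mathbf b_{i,j}$ equals the number of $i$-boxes in the $i$th row of $b'$, and $\ell_{i+1}-\mathbf b_{i+1,j+1}$ equals the number of $(i+1)$-boxes in the $(i+1)$st row of $b'$.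
   Context: Fix $r\ge1$ and $\mathfrak g=\mathfrak{sl}_{r+1}$ with index set $I=\{1,\dots,r\}$, fundamental weights $\omega_1,\dots,\omega_r$, $N=r(r+1)/2$, and $\rho=\sum_i\omega_i$. For a dominant integral weight $\mu=\sum_i m_i\omega_i$, $\mathcal B(\mu)$ is identified (Kashiwara–Nakashima) with the set of semistandard Young tableaux with entries in $\{1,\dots,r+1\}$ of the shape having $m_i$ columns of height $i$; an entry equal to $k$ is a $k$-box. A tableau is identified with the tensor product of its entries read column by column from right to left, each column top to bottom, and $\tilde e_i,\tilde f_i$ act by the signature rule: for each factor write $-$ if it equals $i+1$, $+$ if it equals $i$; repeatedly cancel adjacent $+-$ pairs; $\tilde e_i$ changes the factor of the rightmost remaining $-$ from $i+1$ to $i$ (giving $0$ if none), $\tilde f_i$ changes the factor of the leftmost remaining $+$ from $i$ to $i+1$ (giving $0$ if none). For dominant $\lambda$, $\lambda+\rho$ is viewed as the partition with row lengths $\ell_1>\ell_2>\cdots>\ell_r>\ell_{r+1}=0$ (the shape of tableaux in $\mathcal B(\lambda+\rho)$). Fix the long word $\mathbf i=(i_1,\dots,i_N)=(1,2,1,3,2,1,\dots,r,\dots,2,1)$. The BZL path $\psi_{\mathbf i}(b)=(a_1,\dots,a_N)$: $a_k$ is maximal with $\tilde e_{i_k}^{a_k}\cdots\tilde e_{i_1}^{a_1}b\ne0$. Triangular form: $a_{i,j}=a_{i(i-1)/2+j}$ for $1\le j\le i\le r$; it corresponds to letter $i-j+1$. For $b\in\mathcal B(\lambda+\rho)$ and $1\le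 i\le j\le r$: $\mathbf a_{i,j}$ is the number of $(j+1)$-boxes in rows $1$ through $i$ of $b$; $\mathbf b_{i,j}$ is the number of boxes in the $i$th row of $b$ with entry $\ge j+1$. By convention $\mathbf b_{i,j}=0$ if $i=r+1$ or $j=r+1$. *)

theory Defs
  imports Main
begin

text \<open>Tableaux: T i c is the entry in row i, column c (1-indexed).
  Shapes: l i is the length of row i.\<close>

type_synonym tab = "nat \<Rightarrow> nat \<Rightarrow> nat"

text \<open>Row lengths of lambda + rho, lambda = sum of m_i omega_i with m_i = lam i (1 <= i <= r).
  Row i (1 <= i <= r+1) has length sum_{k=i}^{r} (m_k + 1); in particular l (r+1) = 0.\<close>
definition shape :: "nat \<Rightarrow> (nat \<Rightarrow> nat) \<Rightarrow> nat \<Rightarrow> nat" where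
  "shape r lam i = (\<Sum>k\<in>{i..r}. lam k + 1)"

definition is_cell :: "(nat \<Rightarrow> nat) \<Rightarrow> nat \<Rightarrow> nat \<Rightarrow> bool" where
  "is_cell l i c \<longleftrightarrow> 1 \<le> i \<and> 1 \<le> c \<and> c \<le> l i"

text \<open>Semistandard Young tableaux of shape l with entries in {1..r+1}
  (entries outside the shape are set to 0, so that tableaux are canonical).\<close>
definition SSYT :: "nat \<Rightarrow> (nat \<Rightarrow> nat) \<Rightarrow> tab set" where
  "SSYT r l = {T.
     (\<forall>i c. is_cell l i c \<longrightarrow> 1 \<le> T i c \<and> T i c \<le> r + 1) \<and>
     (\<forall>i c. \<not> is_cell l i c \<longrightarrow> T i c = 0) \<and>
     (\<forall>i c. is_cell l i (Suc c) \<and> 1 \<le> c \<longrightarrow> T i c \<le> T i (Suc c)) \<and>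
     (\<forall>i c. is_cell l (Suc i) c \<and> 1 \<le> i \<longrightarrow> T i c < T (Suc i) c)}"

definition col_height :: "nat \<Rightarrow> (nat \<Rightarrow> nat) \<Rightarrow> nat \<Rightarrow> nat" where
  "col_height r l c = card {i. 1 \<le> i \<and> i \<le> r \<and> c \<le> l i}"

definition cells :: "nat \<Rightarrow> (nat \<Rightarrow> nat) \<Rightarrow> (nat \<times> nat) list" where
  "cells r l = concat (map (\<lambda>c. map (\<lambda>i. (i, c)) [1..<col_height r l c + 1]) (rev [1..<l 1 + 1]))"

definition reading_word :: "nat \<Rightarrow> (nat \<Rightarrow> nat) \<Rightarrow> tab \<Rightarrow> nat list" where
  "reading_word r l T = map (\<lambda>(i, c). T i c) (cells r l)"

text \<open>For a word w and colour i, the signature is the list of positions p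
  with w!p = i (sign +, encoded True) or w!p = i+1 (sign -, encoded False), in order.
  Adjacent +- pairs are cancelled repeatedly (a stack-based scan).\<close>
definition signature :: "nat \<Rightarrow> nat list \<Rightarrow> (nat \<times> bool) list" where
  "signature i w = map (\<lambda>p. (p, w ! p = i)) (filter (\<lambda>p. w ! p = i \<or> w ! p = i + 1) [0..<length w])"

fun cancel_step :: "(nat \<times> bool) list \<Rightarrow> nat \<times> bool \<Rightarrow> (nat \<times> bool) list" where
  "cancel_step ((q, True) # st) (p, False) = st"
| "cancel_step st x = x # st"

definition reduced_signature :: "nat \<Rightarrow> nat list \<Rightarrow> (nat \<times> bool) list" where
  "reduced_signature i w = rev (foldl cancel_step [] (signature i w))"

text \<open>Position acted on by e_i: the rightmost remaining minus (None means e_i gives 0).\<close>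
definition e_pos :: "nat \<Rightarrow> nat list \<Rightarrow> nat option" where
  "e_pos i w = (let ms = map fst (filter (\<lambda>x. \<not> snd x) (reduced_signature i w))
                in if ms = [] then None else Some (last ms))"

text \<open>Kashiwara operator e_i on tableaux of shape l (None represents 0): the entry
  i+1 at the selected factor is changed to i.\<close>
definition e_tab :: "nat \<Rightarrow> (nat \<Rightarrow> nat) \<Rightarrow> nat \<Rightarrow> tab \<Rightarrow> tab option" where
  "e_tab r l i T = (case e_pos i (reading_word r l T) of
      None \<Rightarrow> None
    | Some p \<Rightarrow> (case cells r l ! p of (a, c) \<Rightarrow> Some (T(a := (T a)(c := i)))))"

fun e_pow :: "nat \<Rightarrow> (nat \<Rightarrow> nat) \<Rightarrow> nat \<Rightarrow> nat \<Rightarrow> tab \<Rightarrow> tab option" where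
  "e_pow r l i 0 T = Some T"
| "e_pow r l i (Suc n) T = Option.bind (e_pow r l i n T) (e_tab r l i)"

definition eps :: "nat \<Rightarrow> (nat \<Rightarrow> nat) \<Rightarrow> nat \<Rightarrow> tab \<Rightarrow> nat" where
  "eps r l i T = (GREATEST a. e_pow r l i a T \<noteq> None)"

definition long_word :: "nat \<Rightarrow> nat list" where
  "long_word r = concat (map (\<lambda>m. rev [1..<m + 1]) [1..<r + 1])"

fun bzl :: "nat \<Rightarrow> (nat \<Rightarrow> nat) \<Rightarrow> nat list \<Rightarrow> tab \<Rightarrow> nat list \<times> tab" where
  "bzl r l [] T = ([], T)"
| "bzl r l (i # is) T =
     (let a = eps r l i T; T' = the (e_pow r l i a T); (as, T'') = bzl r l is T'
      in (a # as, T''))"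

definition bb :: "nat \<Rightarrow> (nat \<Rightarrow> nat) \<Rightarrow> tab \<Rightarrow> nat \<Rightarrow> nat \<Rightarrow> nat" where
  "bb r l T i j = (if i = r + 1 \<or> j = r + 1 then 0
                   else card {c. 1 \<le> c \<and> c \<le> l i \<and> j + 1 \<le> T i c})"

definition boxes_in_row :: "(nat \<Rightarrow> nat) \<Rightarrow> tab \<Rightarrow> nat \<Rightarrow> nat \<Rightarrow> nat" where
  "boxes_in_row l T i v = card {c. 1 \<le> c \<and> c \<le> l i \<and> T i c = v}"

end

theory Submission
  imports Defs
begin

(* Processing the long word block by block, we track an explicit description of
   the tableau.  After the blocks for the colours 1..m-1, every entry \<le> m of b has been
   "rectified": in row p it has become p, while entries \<ge> m+1 are untouched (invariant
   stage b (m-1) 0 T below).  Inside block m the colours m, m-1, ..., c+1 have been applied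
   (invariant stage b m c T): an (m+1)-box of b in a row p \<le> c now carries the value c+1,
   every other entry \<le> m+1 in row p carries p.  Applying e_c maximally lowers exactly the
   "pending" cells (rows \<le> c, value c+1) to c, from left to right; this is the content of the
   signature analysis, where every (c+1) below row c is cancelled by the c directly above it.

   The two identities of the theorem are finally
   read off from the invariant by counting the cells of rows i and i+1. *)

definition read_before :: "nat \<times> nat \<Rightarrow> nat \<times> nat \<Rightarrow> bool" where
  "read_before u v \<longleftrightarrow> snd v < snd u \<or> (snd u = snd v \<and> fst u < fst v)"

lemma column_reading_sorted:
  "sorted_wrt read_before (concat (map (\<lambda>c. map (\<lambda>i. (i, c)) [1..<h c + 1]) (rev [1..<n + 1])))"
proof (induction n)
  case 0 then show ?case by simp
next
  case (Suc n)
  have split: "rev [1..<Suc n + 1] = Suc n # rev [1..<n+1]" by simp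
  have column: "sorted_wrt read_before (map (\<lambda>i. (i, Suc n)) [1..<h (Suc n) + 1])"
    unfolding sorted_wrt_map
    by (rule sorted_wrt_mono_rel[OF _ sorted_wrt_upt]) (simp add: read_before_def)
  have later: "\<forall>x\<in>set (map (\<lambda>i. (i, Suc n)) [1..<h (Suc n) + 1]).
      \<forall>y\<in>set (concat (map (\<lambda>c. map (\<lambda>i. (i, c)) [1..<h c + 1]) (rev [1..<n + 1]))).
        read_before x y"
    by (auto simp: read_before_def)
  show ?case unfolding split
    using column later Suc.IH by (simp add: sorted_wrt_append del: upt_Suc)
qed

lemma column_reading_set:
  "set (concat (map (\<lambda>c. map (\<lambda>i. (i, c)) [1..<h c + 1]) (rev [1..<n + 1])))
     = {(i,c). 1 \<le> c \<and> c \<le> n \<and> 1 \<le> i \<and> i \<le> h c}"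
proof (intro set_eqI iffI)
  fix z assume "z \<in> {(i,c). 1 \<le> c \<and> c \<le> n \<and> 1 \<le> i \<and> i \<le> h c}"
  then obtain i c where "z = (i,c)" "1 \<le> c" "c \<le> n" "1 \<le> i" "i \<le> h c" by auto
  then show "z \<in> set (concat (map (\<lambda>c. map (\<lambda>i. (i, c)) [1..<h c + 1]) (rev [1..<n + 1])))"
    by (auto simp del: upt_Suc intro!: bexI[where x=c])
qed (auto simp del: upt_Suc)

section \<open>The signature rule on words\<close>

lemma cancel_fold_minus:
  "(\<forall>z\<in>set xs. \<not> snd z) \<Longrightarrow> (\<forall>z\<in>set st. \<not> snd z) \<Longrightarrow> foldl cancel_step st xs = rev xs @ st"
proof (induction xs arbitrary: st)
  case Nil then show ?case by simp
next
  case (Cons x xs)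
  obtain p s where x: "x = (p,s)" by force
  with Cons have s: "\<not> s" by auto
  have "cancel_step st x = x # st"
  proof (cases st)
    case Nil then show ?thesis by (simp add: x s)
  next
    case (Cons y ys)
    obtain q t where y: "y = (q,t)" by force
    with Cons.prems local.Cons have "\<not> t" by auto
    then show ?thesis by (simp add: x s local.Cons y)
  qed
  then show ?case using Cons by simp
qed

text \<open>If on the segment [L,n) every letter c+1 directly follows a letter c of the segment,
  then every minus sign of the segment is cancelled by the plus just before it: scanning the
  segment only pushes plus signs on top of the incoming stack.\<close>
lemma cancel_fold_paired:
  fixes w :: "nat list"
  assumes paired: "\<And>q. L \<le> q \<Longrightarrow> q < length w \<Longrightarrow> w!q = Suc c \<Longrightarrow> L < q \<and> w!(q-1) = c"
    and "L \<le> n" "n \<le> length w"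
  shows "\<exists>zs. foldl cancel_step st (map (\<lambda>p. (p, w!p = c)) (filter (\<lambda>p. w!p = c \<or> w!p = c+1) [L..<n]))
     = zs @ st \<and> (\<forall>z\<in>set zs. snd z) \<and> (L < n \<and> w!(n-1) = c \<longrightarrow> zs \<noteq> [] \<and> hd zs = (n-1, True))"
  using assms(2,3)
proof (induction n rule: dec_induct)
  case base then show ?case by simp
next
  case (step n)
  then obtain zs where zs:
    "foldl cancel_step st (map (\<lambda>p. (p, w!p = c)) (filter (\<lambda>p. w!p = c \<or> w!p = c+1) [L..<n]))
       = zs @ st" "\<forall>z\<in>set zs. snd z" "L < n \<and> w!(n-1) = c \<longrightarrow> zs \<noteq> [] \<and> hd zs = (n-1, True)"
    by auto
  have u: "[L..<Suc n] = [L..<n] @ [n]" using step by simp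
  consider "w!n = c" | "w!n = Suc c" | "w!n \<noteq> c \<and> w!n \<noteq> Suc c" by blast
  then show ?case
  proof cases
    case 1
    then show ?thesis using zs unfolding u by (intro exI[of _ "(n,True) # zs"]) auto
  next
    case 2
    with paired step have "L < n \<and> w!(n-1) = c" by auto
    with zs have top: "zs = (n-1,True) # tl zs" by (cases zs) auto
    have "foldl cancel_step st (map (\<lambda>p. (p, w!p = c)) (filter (\<lambda>p. w!p = c \<or> w!p = c+1) [L..<Suc n]))
       = cancel_step (zs @ st) (n, False)" unfolding u using zs 2 by simp
    also have "\<dots> = tl zs @ st" by (subst top) simp
    moreover have "\<forall>z\<in>set (tl zs). snd z" using zs(2) by (metis list.sel(3) list.set_intros(2) top)
    ultimately show ?thesis using 2 by (intro exI[of _ "tl zs"]) auto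
  next
    case 3
    then show ?thesis using zs unfolding u by (intro exI[of _ zs]) auto
  qed
qed

lemma e_pos_split:
  fixes w :: "nat list"
  assumes L: "L \<le> length w"
    and no_plus: "\<And>p. p < L \<Longrightarrow> w ! p \<noteq> c"
    and paired: "\<And>q. L \<le> q \<Longrightarrow> q < length w \<Longrightarrow> w!q = Suc c \<Longrightarrow> L < q \<and> w!(q-1) = c"
  shows "e_pos c w = (let ms = filter (\<lambda>p. w ! p = Suc c) [0..<L]
                      in if ms = [] then None else Some (last ms))"
proof -
  define Q where "Q = (\<lambda>p. w ! p = c \<or> w ! p = c + 1)"
  define f where "f = (\<lambda>p. (p, w ! p = c))"
  define xs where "xs = map f (filter Q [0..<L])"
  define ys where "ys = map f (filter Q [L..<length w])"
  have "[0..<length w] = [0..<L] @ [L..<length w]"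
    using L upt_add_eq_append[of 0 L "length w - L"] by simp
  then have sig: "signature c w = xs @ ys"
    unfolding signature_def xs_def ys_def f_def Q_def by simp
  have xs_minus: "\<forall>z\<in>set xs. \<not> snd z" unfolding xs_def f_def using no_plus by auto
  obtain zs where zs: "foldl cancel_step (rev xs) ys = zs @ rev xs" "\<forall>z\<in>set zs. snd z"
    using cancel_fold_paired[OF paired L order.refl, of "rev xs"] unfolding ys_def f_def Q_def
    by blast
  have "foldl cancel_step [] xs = rev xs" using cancel_fold_minus[OF xs_minus, of "[]"] by simp
  then have "reduced_signature c w = xs @ rev zs"
    unfolding reduced_signature_def sig foldl_append using zs(1) by simp
  moreover have "filter (\<lambda>x. \<not> snd x) (xs @ rev zs) = xs" using xs_minus zs(2) by simp
  moreover have "filter Q [0..<L] = filter (\<lambda>p. w ! p = Suc c) [0..<L]"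
    unfolding Q_def using no_plus by (intro filter_cong) auto
  then have "map fst xs = filter (\<lambda>p. w ! p = Suc c) [0..<L]"
    unfolding xs_def f_def by (simp add: comp_def)
  ultimately show ?thesis unfolding e_pos_def by (simp add: Let_def)
qed

lemma takeWhile_length_nth: "p < length (takeWhile P xs) \<Longrightarrow> P (xs ! p)"
proof -
  assume p: "p < length (takeWhile P xs)"
  then have "takeWhile P xs ! p \<in> set (takeWhile P xs)" by (rule nth_mem)
  moreover have "takeWhile P xs ! p = xs ! p" using p by (rule takeWhile_nth)
  ultimately show "P (xs ! p)" by (metis set_takeWhileD)
qed

lemma sorted_le_last: "sorted xs \<Longrightarrow> x \<in> set xs \<Longrightarrow> x \<le> last xs"
  by (induction xs) (auto simp: sorted_append)

lemma e_pow_Suc_inner: "e_pow rr l i (Suc n) T = Option.bind (e_tab rr l i T) (e_pow rr l i n)"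
proof (induction n)
  case 0 then show ?case by (cases "e_tab rr l i T") auto
next
  case (Suc n)
  show ?case by (simp only: e_pow.simps(2)[of _ _ _ "Suc n"] Suc) (cases "e_tab rr l i T"; simp)
qed

lemma e_pow_None_mono:
  assumes "e_pow rr l i n T = None" "n \<le> n'" shows "e_pow rr l i n' T = None"
  using assms(2) by (induction n' rule: dec_induct) (use assms(1) in auto)

lemma snd_bzl_Cons:
  "snd (bzl rr l (i # is) T) = snd (bzl rr l is (the (e_pow rr l i (eps rr l i T) T)))"
  by (simp add: Let_def split_beta)

lemma snd_bzl_append: "snd (bzl rr l (xs @ ys) T) = snd (bzl rr l ys (snd (bzl rr l xs T)))"
  by (induction xs arbitrary: T) (simp_all only: append.simps snd_bzl_Cons, simp_all)

lemma long_word_Suc: "long_word (Suc m) = long_word m @ rev [1..<Suc m + 1]"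
  unfolding long_word_def by simp

lemma length_long_word: "2 * length (long_word m) = m * (m + 1)"
  by (induction m) (simp_all add: long_word_def long_word_Suc)

lemma long_word_split:
  assumes "1 \<le> j" "j \<le> n"
  shows "\<exists>rest. long_word n = long_word (j - 1) @ rev [1..<j + 1] @ rest"
proof -
  have u0: "[1..<j + (n + 1 - j)] = [1..<j] @ [j..<j + (n + 1 - j)]"
    by (rule upt_add_eq_append) (use assms in simp)
  have "j + (n + 1 - j) = n + 1" using assms by simp
  then have u: "[1..<n + 1] = [1..<j] @ j # [Suc j..<n + 1]"
    using u0 upt_conv_Cons[of j "n + 1"] assms by simp
  have "long_word (j - 1) = concat (map (\<lambda>m. rev [1..<m + 1]) [1..<j])"
    unfolding long_word_def using assms by simp
  then show ?thesis unfolding long_word_def u by auto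
qed

text \<open>Position k = j(j-1)/2 + (j-i+1) of the long word is the letter i of block j; the
  letters before it are the blocks 1..j-1 followed by j, j-1, ..., i+1.\<close>
lemma take_long_word:
  assumes "1 \<le> i" "i \<le> j" "j \<le> n" "k = j * (j - 1) div 2 + (j - i + 1)"
  shows "take (k - 1) (long_word n) = long_word (j - 1) @ rev [Suc i..<Suc j]"
proof -
  obtain rest where rest: "long_word n = long_word (j - 1) @ rev [1..<j + 1] @ rest"
    using long_word_split[of j n] assms by auto
  have "length (long_word (j - 1)) = j * (j - 1) div 2"
    using length_long_word[of "j - 1"] assms by (simp add: mult.commute)
  then have k: "k - 1 = length (long_word (j - 1)) + (j - i)" using assms by simp
  have u0: "[1..<Suc i + (j - i)] = [1..<Suc i] @ [Suc i..<Suc i + (j - i)]"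
    by (rule upt_add_eq_append) simp
  have "Suc i + (j - i) = j + 1" using assms by simp
  then have u: "[1..<j + 1] = [1..<Suc i] @ [Suc i..<Suc j]" using u0 by simp
  have "take (j - i) (rev [1..<j + 1] @ rest) = rev [Suc i..<Suc j]"
    unfolding u by (simp add: take_append) arith
  then show ?thesis unfolding k rest by simp
qed

lemma card_down_closed:
  fixes S :: "nat set"
  assumes "finite S" "\<forall>i\<in>S. 1 \<le> i" "\<forall>i\<in>S. \<forall>j. 1 \<le> j \<and> j \<le> i \<longrightarrow> j \<in> S"
  shows "S = {1..card S}"
proof (cases "S = {}")
  case False
  have "Max S \<in> S" using False assms(1) by simp
  have S: "S = {1..Max S}"
  proof
    show "S \<subseteq> {1..Max S}" using assms(1,2) by auto
    show "{1..Max S} \<subseteq> S" using \<open>Max S \<in> S\<close> assms(3) by auto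
  qed
  then have "card S = Max S" by (metis card_atLeastAtMost diff_Suc_1)
  then show ?thesis using S by simp
qed simp

lemma card_row_split:
  "card {x. 1 \<le> x \<and> x \<le> n \<and> P x} + card {x. 1 \<le> x \<and> x \<le> (n::nat) \<and> \<not> P x} = n"
proof -
  have "{x. 1 \<le> x \<and> x \<le> n \<and> P x} \<union> {x. 1 \<le> x \<and> x \<le> n \<and> \<not> P x} = {1..n}" by auto
  moreover have "card ({x. 1 \<le> x \<and> x \<le> n \<and> P x} \<union> {x. 1 \<le> x \<and> x \<le> n \<and> \<not> P x})
      = card {x. 1 \<le> x \<and> x \<le> n \<and> P x} + card {x. 1 \<le> x \<and> x \<le> n \<and> \<not> P x}"
    by (rule card_Un_disjoint) auto
  ultimately show ?thesis by simp
qed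

text \<open>A Young shape with at most r nonempty rows: row lengths weakly decrease and vanish below
  row r.  The shape of lambda + rho is an instance; nothing else about it is needed.\<close>
locale young_shape =
  fixes r :: nat and l :: "nat \<Rightarrow> nat"
  assumes row_antimono: "p \<le> q \<Longrightarrow> l q \<le> l p"
    and row_vanish: "r < p \<Longrightarrow> l p = 0"

lemma young_shape_shape: "young_shape r (shape r lam)"
proof
  show "shape r lam q \<le> shape r lam p" if "p \<le> q" for p q
    unfolding shape_def using that by (intro sum_mono2) auto
  show "shape r lam p = 0" if "r < p" for p
    unfolding shape_def using that by simp
qed

context young_shape
begin

lemma cell_row_le: "is_cell l p x \<Longrightarrow> p \<le> r"
  using row_vanish[of p] unfolding is_cell_def by (cases "r < p") auto

lemma cell_up: "is_cell l p x \<Longrightarrow> 1 \<le> q \<Longrightarrow> q \<le> p \<Longrightarrow> is_cell l q x"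
  using row_antimono unfolding is_cell_def by (meson le_trans)

lemma cell_left: "is_cell l p x \<Longrightarrow> 1 \<le> y \<Longrightarrow> y \<le> x \<Longrightarrow> is_cell l p y"
  unfolding is_cell_def by auto

lemma in_column_iff:
  assumes "1 \<le> x"
  shows "(1 \<le> p \<and> p \<le> col_height r l x) \<longleftrightarrow> (1 \<le> p \<and> p \<le> r \<and> x \<le> l p)"
proof -
  let ?S = "{i. 1 \<le> i \<and> i \<le> r \<and> x \<le> l i}"
  have "?S = {1..card ?S}"
  proof (rule card_down_closed)
    show "finite ?S" by (rule finite_subset[of _ "{..r}"]) auto
    show "\<forall>i\<in>?S. 1 \<le> i" by auto
    show "\<forall>i\<in>?S. \<forall>j. 1 \<le> j \<and> j \<le> i \<longrightarrow> j \<in> ?S"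
      using row_antimono by (auto intro: le_trans)
  qed
  then have "p \<in> ?S \<longleftrightarrow> p \<in> {1..card ?S}" by simp
  then show ?thesis unfolding col_height_def by auto
qed

lemma set_cells: "set (cells r l) = {(p,x). is_cell l p x}"
proof -
  have "set (cells r l) = {(i,c). 1 \<le> c \<and> c \<le> l 1 \<and> 1 \<le> i \<and> i \<le> col_height r l c}"
    unfolding cells_def by (rule column_reading_set)
  also have "\<dots> = {(p,x). is_cell l p x}"
  proof (intro set_eqI iffI)
    fix z assume "z \<in> {(i,c). 1 \<le> c \<and> c \<le> l 1 \<and> 1 \<le> i \<and> i \<le> col_height r l c}"
    then show "z \<in> {(p,x). is_cell l p x}" using in_column_iff unfolding is_cell_def by auto
  next
    fix z assume "z \<in> {(p,x). is_cell l p x}"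
    then obtain p x where z: "z = (p,x)" "is_cell l p x" by auto
    then have "p \<le> r" "l p \<le> l 1"
      using cell_row_le row_antimono unfolding is_cell_def by auto
    then show "z \<in> {(i,c). 1 \<le> c \<and> c \<le> l 1 \<and> 1 \<le> i \<and> i \<le> col_height r l c}"
      using z in_column_iff[of x p] unfolding is_cell_def by auto
  qed
  finally show ?thesis .
qed

lemma cells_read_before: "n < n' \<Longrightarrow> n' < length (cells r l) \<Longrightarrow> read_before (cells r l ! n) (cells r l ! n')"
  using column_reading_sorted unfolding cells_def by (simp add: sorted_wrt_iff_nth_less)

lemma cells_read_before_iff:
  assumes "n < length (cells r l)" "n' < length (cells r l)"
  shows "read_before (cells r l ! n) (cells r l ! n') \<longleftrightarrow> n < n'"
proof
  assume before: "read_before (cells r l ! n) (cells r l ! n')"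
  show "n < n'"
  proof (rule ccontr)
    assume "\<not> n < n'"
    then consider "n = n'" | "n' < n" by linarith
    then show False
    proof cases
      case 1 then show ?thesis using before by (auto simp: read_before_def)
    next
      case 2 then show ?thesis using before cells_read_before[of n' n] assms
        by (auto simp: read_before_def)
    qed
  qed
next
  assume "n < n'"
  then show "read_before (cells r l ! n) (cells r l ! n')" using assms(2) by (rule cells_read_before)
qed

lemma cell_index: "is_cell l p x \<Longrightarrow> \<exists>n < length (cells r l). cells r l ! n = (p,x)"
  using set_cells by (metis (mono_tags, lifting) case_prodI in_set_conv_nth mem_Collect_eq)

lemma cell_at_index: "n < length (cells r l) \<Longrightarrow> is_cell l (fst (cells r l ! n)) (snd (cells r l ! n))"
  using set_cells nth_mem by fastforce

lemma cells_below_next: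
  assumes "n < length (cells r l)" "n' < length (cells r l)"
    "cells r l ! n = (p,x)" "cells r l ! n' = (Suc p, x)"
  shows "n' = Suc n"
proof -
  have "n < n'" using cells_read_before_iff[OF assms(1,2)] assms(3,4) by (simp add: read_before_def)
  show ?thesis
  proof (rule ccontr)
    assume "n' \<noteq> Suc n"
    with \<open>n < n'\<close> have "Suc n < n'" by simp
    then have "read_before (cells r l ! n) (cells r l ! Suc n)"
        "read_before (cells r l ! Suc n) (cells r l ! n')"
      using cells_read_before[of n "Suc n"] cells_read_before[of "Suc n" n'] assms by auto
    then show False using assms(3,4) by (auto simp: read_before_def)
  qed
qed

lemma reading_word_nth:
  "n < length (cells r l) \<Longrightarrow> reading_word r l T ! n = T (fst (cells r l ! n)) (snd (cells r l ! n))"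
  unfolding reading_word_def by (simp add: case_prod_beta)

lemma length_reading_word: "length (reading_word r l T) = length (cells r l)"
  unfolding reading_word_def by simp

lemma ssyt_range: "T \<in> SSYT r l \<Longrightarrow> is_cell l p x \<Longrightarrow> 1 \<le> T p x \<and> T p x \<le> r + 1"
  unfolding SSYT_def by auto

lemma ssyt_zero: "T \<in> SSYT r l \<Longrightarrow> \<not> is_cell l p x \<Longrightarrow> T p x = 0"
  unfolding SSYT_def by auto

lemma ssyt_row_mono:
  assumes T: "T \<in> SSYT r l"
  shows "is_cell l p x \<Longrightarrow> 1 \<le> y \<Longrightarrow> y \<le> x \<Longrightarrow> T p y \<le> T p x"
proof (induction x rule: nat_less_induct)
  case (1 x)
  show ?case
  proof (cases "y = x")
    case False
    with 1 obtain x' where x': "x = Suc x'" "y \<le> x'" by (cases x) auto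
    have c': "is_cell l p x'" using 1(2,3) x' cell_left by auto
    have "T p y \<le> T p x'" using 1 x' c' by auto
    also have "T p x' \<le> T p x" using T 1 x' c' unfolding SSYT_def is_cell_def by auto
    finally show ?thesis .
  qed simp
qed

lemma ssyt_col_strict:
  assumes T: "T \<in> SSYT r l"
  shows "is_cell l p x \<Longrightarrow> 1 \<le> q \<Longrightarrow> q < p \<Longrightarrow> T q x < T p x"
proof (induction p rule: nat_less_induct)
  case (1 p)
  obtain p' where p': "p = Suc p'" "q \<le> p'" using 1 by (cases p) auto
  have c': "is_cell l p' x" using 1 p' cell_up by auto
  have step: "T p' x < T p x" using T 1 p' c' unfolding SSYT_def is_cell_def by auto
  show ?case
  proof (cases "q = p'")
    case False
    then have "T q x < T p' x" using 1 p' c' by auto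
    then show ?thesis using step by simp
  qed (use step in simp)
qed

lemma ssyt_ge_row: "T \<in> SSYT r l \<Longrightarrow> is_cell l p x \<Longrightarrow> p \<le> T p x"
proof (induction p)
  case (Suc p)
  show ?case
  proof (cases "p = 0")
    case True then show ?thesis using ssyt_range Suc by auto
  next
    case False
    then have "is_cell l p x" using Suc cell_up by auto
    then show ?thesis using Suc ssyt_col_strict[of T "Suc p" x p] False by auto
  qed
qed simp

section \<open>The invariants\<close>

text \<open>Compared with b, the tableau T has left the entries above m+1 alone and has kept the
  entries \<le> m+1 below m+2; this holds throughout the blocks for the colours 1..m.\<close>
definition untouched_above :: "tab \<Rightarrow> nat \<Rightarrow> tab \<Rightarrow> bool" where
  "untouched_above b m T \<longleftrightarrow> (\<forall>p x. is_cell l p x \<longrightarrow>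
     (Suc m < b p x \<longrightarrow> T p x = b p x) \<and> (b p x \<le> Suc m \<longrightarrow> T p x \<le> Suc m))"

text \<open>The state after the colours m, m-1, ..., c+1 of block m: among the entries \<le> m+1,
  those in rows p > c equal p, and those in rows p \<le> c equal p, except that the
  (m+1)-boxes of b carry the value c+1.\<close>
definition stage :: "tab \<Rightarrow> nat \<Rightarrow> nat \<Rightarrow> tab \<Rightarrow> bool" where
  "stage b m c T \<longleftrightarrow> T \<in> SSYT r l \<and> untouched_above b m T \<and>
     (\<forall>p x. is_cell l p x \<longrightarrow> T p x \<le> Suc m \<longrightarrow> (c < p \<longrightarrow> T p x = p) \<and>
        (p \<le> c \<longrightarrow> (T p x = p \<or> T p x = Suc c) \<and> (T p x = Suc c \<longleftrightarrow> b p x = Suc m)))"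

text \<open>The state while e_c is being applied: some of the (c+1)-boxes in rows \<le> c have been
  lowered to c, and every lowered box lies strictly left of every box still carrying c+1.\<close>
definition mid_stage :: "tab \<Rightarrow> nat \<Rightarrow> nat \<Rightarrow> tab \<Rightarrow> bool" where
  "mid_stage b m c T \<longleftrightarrow> T \<in> SSYT r l \<and> untouched_above b m T \<and>
     (\<forall>p x. is_cell l p x \<longrightarrow> T p x \<le> Suc m \<longrightarrow> (c < p \<longrightarrow> T p x = p) \<and>
        (p \<le> c \<longrightarrow> T p x = p \<or> T p x = c \<or> T p x = Suc c) \<and>
        (p < c \<longrightarrow> (T p x = c \<or> T p x = Suc c) = (b p x = Suc m))) \<and>
     (\<forall>p x q y. is_cell l p x \<longrightarrow> is_cell l q y \<longrightarrow> p \<le> c \<longrightarrow> q \<le> c \<longrightarrow>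
        T p x = c \<longrightarrow> T q y = Suc c \<longrightarrow> x < y)"

text \<open>The boxes still to be lowered by e_c.\<close>
definition pending :: "nat \<Rightarrow> tab \<Rightarrow> (nat \<times> nat) set" where
  "pending c T = {(p,x). is_cell l p x \<and> p \<le> c \<and> T p x = Suc c}"

lemma untouched_aboveD:
  assumes "untouched_above b m T" "is_cell l p x"
  shows "Suc m < b p x \<Longrightarrow> T p x = b p x" and "b p x \<le> Suc m \<Longrightarrow> T p x \<le> Suc m"
  using assms unfolding untouched_above_def by auto

lemma stageD:
  assumes "stage b m c T"
  shows "T \<in> SSYT r l" and "untouched_above b m T"
    and "\<And>p x. is_cell l p x \<Longrightarrow> T p x \<le> Suc m \<Longrightarrow> c < p \<Longrightarrow> T p x = p"
    and "\<And>p x. is_cell l p x \<Longrightarrow> T p x \<le> Suc m \<Longrightarrow> p \<le> c \<Longrightarrow> T p x = p \<or> T p x = Suc c"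
    and "\<And>p x. is_cell l p x \<Longrightarrow> T p x \<le> Suc m \<Longrightarrow> p \<le> c \<Longrightarrow> T p x = Suc c \<longleftrightarrow> b p x = Suc m"
  using assms unfolding stage_def by auto

lemma mid_stageD:
  assumes "mid_stage b m c T"
  shows "T \<in> SSYT r l" and "untouched_above b m T"
    and "\<And>p x. is_cell l p x \<Longrightarrow> T p x \<le> Suc m \<Longrightarrow> c < p \<Longrightarrow> T p x = p"
    and "\<And>p x. is_cell l p x \<Longrightarrow> T p x \<le> Suc m \<Longrightarrow> p \<le> c \<Longrightarrow> T p x = p \<or> T p x = c \<or> T p x = Suc c"
    and "\<And>p x. is_cell l p x \<Longrightarrow> T p x \<le> Suc m \<Longrightarrow> p < c \<Longrightarrow> (T p x = c \<or> T p x = Suc c) = (b p x = Suc m)"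
    and "\<And>p x q y. is_cell l p x \<Longrightarrow> is_cell l q y \<Longrightarrow> p \<le> c \<Longrightarrow> q \<le> c \<Longrightarrow>
          T p x = c \<Longrightarrow> T q y = Suc c \<Longrightarrow> x < y"
  using assms unfolding mid_stage_def by auto

lemma untouched_above_update:
  assumes "untouched_above b m T" "T a x0 \<le> Suc m" "v \<le> Suc m"
  shows "untouched_above b m (T(a := (T a)(x0 := v)))"
  using assms unfolding untouched_above_def by fastforce

lemma stage_start: "b \<in> SSYT r l \<Longrightarrow> stage b 0 0 b"
  unfolding stage_def untouched_above_def using ssyt_ge_row[of b] by fastforce

lemma stage_next_block:
  assumes "stage b m 0 T" shows "stage b (Suc m) (Suc m) T"
proof -
  note st = stageD[OF assms]
  note kept = untouched_aboveD[OF st(2)]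
  have rectified: "\<And>p x. is_cell l p x \<Longrightarrow> T p x \<le> Suc m \<Longrightarrow> T p x = p"
    using st(3) unfolding is_cell_def by auto
  show ?thesis unfolding stage_def
  proof (intro conjI st(1) allI impI)
    show "untouched_above b (Suc m) T" unfolding untouched_above_def
    proof (intro allI impI conjI)
      fix p x assume "is_cell l p x" "Suc (Suc m) < b p x" then show "T p x = b p x" using kept by auto
    next
      fix p x assume "is_cell l p x" "b p x \<le> Suc (Suc m)"
      then show "T p x \<le> Suc (Suc m)" using kept[of p x] by (cases "b p x \<le> Suc m") auto
    qed
  next
    fix p x assume "is_cell l p x" "T p x \<le> Suc (Suc m)" "Suc m < p"
    then show "T p x = p" using ssyt_ge_row[OF st(1)] by fastforce
  next
    fix p x assume c: "is_cell l p x" "T p x \<le> Suc (Suc m)" "p \<le> Suc m"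
    show "T p x = p \<or> T p x = Suc (Suc m)"
      using c rectified[OF c(1)] by (cases "T p x \<le> Suc m") auto
    show "(T p x = Suc (Suc m)) = (b p x = Suc (Suc m))"
      using kept[OF c(1)] by (cases "b p x \<le> Suc m") auto
  qed
qed

lemma stage_mid_stage:
  assumes "stage b m c T" "c \<le> m" shows "mid_stage b m c T"
proof -
  note st = stageD[OF assms(1)]
  show ?thesis unfolding mid_stage_def
  proof (intro conjI st(1,2) allI impI)
    fix p x assume "is_cell l p x" "T p x \<le> Suc m" "p \<le> c"
    then show "T p x = p \<or> T p x = c \<or> T p x = Suc c" using st(4) by blast
  next
    fix p x assume "is_cell l p x" "T p x \<le> Suc m" "p < c"
    then show "(T p x = c \<or> T p x = Suc c) = (b p x = Suc m)" using st(4,5)[of p x] by auto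
  next
    fix p x q y assume a: "is_cell l p x" "is_cell l q y" "p \<le> c" "q \<le> c" "T p x = c" "T q y = Suc c"
    have pc: "p = c" using st(4)[OF a(1) _ a(3)] a(5) assms(2) by auto
    show "x < y"
    proof (rule ccontr)
      assume "\<not> x < y"
      then have yx: "y \<le> x" by simp
      have y1: "1 \<le> y" using a(2) unfolding is_cell_def by simp
      have cy: "is_cell l c y" using a(1) pc y1 yx cell_left by auto
      have "T c y \<le> T c x" using ssyt_row_mono[OF st(1), of c x y] a(1) pc y1 yx by simp
      then have "T c y \<le> c" using a(5) pc by simp
      moreover have "q < c \<Longrightarrow> T q y < T c y"
        using ssyt_col_strict[OF st(1) cy] a(2) unfolding is_cell_def by simp
      ultimately show False using a(4,6) by (cases "q = c") auto
    qed
  qed (use st(3) in auto)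
qed

lemma mid_stage_done:
  assumes "mid_stage b m c T" "pending c T = {}" "1 \<le> c" shows "stage b m (c - 1) T"
proof -
  note st = mid_stageD[OF assms(1)]
  have not_pending: "\<And>p x. is_cell l p x \<Longrightarrow> p \<le> c \<Longrightarrow> T p x \<noteq> Suc c"
    using assms(2) unfolding pending_def by auto
  show ?thesis unfolding stage_def
  proof (intro conjI st(1,2) allI impI)
    fix p x assume a: "is_cell l p x" "T p x \<le> Suc m" "c - 1 < p"
    then consider "c < p" | "p = c" by linarith
    then show "T p x = p" using st(3,4)[OF a(1,2)] not_pending[OF a(1)] by cases auto
  next
    fix p x assume a: "is_cell l p x" "T p x \<le> Suc m" "p \<le> c - 1"
    then have pc: "p < c" "p \<le> c" using assms(3) by auto
    show "T p x = p \<or> T p x = Suc (c - 1)"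
      using st(4)[OF a(1,2) pc(2)] not_pending[OF a(1) pc(2)] assms(3) by auto
    show "(T p x = Suc (c - 1)) = (b p x = Suc m)"
      using st(5)[OF a(1,2) pc(1)] not_pending[OF a(1) pc(2)] assms(3) by auto
  qed
qed

text \<open>There are finitely many pending boxes; their number is eps_c.\<close>
lemma finite_pending: "finite (pending c T)"
  by (rule finite_subset[of _ "{..c} \<times> {..l 1}"])
     (auto simp: pending_def is_cell_def intro: le_trans[OF _ row_antimono])

section \<open>One string of e_c on a mid-stage\<close>

lemma mid_stage_c_row:
  assumes "mid_stage b m c T" "c \<le> m" "is_cell l p x" "T p x = c"
  shows "p \<le> c"
  using mid_stageD(3)[OF assms(1,3)] assms(2,4) by (cases "c < p") auto

lemma pending_read_before_plus:
  assumes G: "mid_stage b m c T" and cm: "c \<le> m"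
    and n: "n < length (cells r l)" "cells r l ! n \<in> pending c T"
    and n': "n' < length (cells r l)" "reading_word r l T ! n' = c"
  shows "n < n'"
proof -
  obtain p x where px: "cells r l ! n' = (p, x)" by force
  obtain q y where qy: "cells r l ! n = (q, y)" by force
  have cell: "is_cell l p x" "T p x = c"
    using cell_at_index[OF n'(1)] reading_word_nth[OF n'(1)] n'(2) px by auto
  have "x < y"
    using mid_stageD(6)[OF G cell(1) _ mid_stage_c_row[OF G cm cell] _ cell(2)] n(2) qy
    unfolding pending_def by auto
  then have "read_before (cells r l ! n) (cells r l ! n')" using px qy by (simp add: read_before_def)
  then show "n < n'" using cells_read_before_iff n(1) n'(1) by blast
qed

text \<open>A letter c+1 that is not pending sits in row c+1 directly below a letter c, so in the
  reading word it directly follows that c.\<close>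
lemma unpending_follows_plus:
  assumes G: "mid_stage b m c T" and c1: "1 \<le> c" and cm: "c \<le> m"
    and n: "n < length (cells r l)" "reading_word r l T ! n = Suc c" "cells r l ! n \<notin> pending c T"
  shows "0 < n \<and> reading_word r l T ! (n - 1) = c"
proof -
  note TS = mid_stageD(1)[OF G]
  obtain q y where qy: "cells r l ! n = (q, y)" by force
  have cq: "is_cell l q y" "T q y = Suc c"
    using cell_at_index[OF n(1)] reading_word_nth[OF n(1)] n(2) qy by auto
  have "c < q" using n(3) cq qy unfolding pending_def by auto
  then have qc: "q = Suc c" using mid_stageD(3)[OF G cq(1)] cq(2) cm by simp
  have cc: "is_cell l c y" using cell_up[OF cq(1) c1] qc by simp
  have "T c y < T q y" using ssyt_col_strict[OF TS cq(1) c1] qc by simp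
  moreover have "c \<le> T c y" using ssyt_ge_row[OF TS cc] .
  ultimately have Tc: "T c y = c" using cq(2) by simp
  obtain n0 where n0: "n0 < length (cells r l)" "cells r l ! n0 = (c, y)"
    using cell_index[OF cc] by blast
  have "n = Suc n0" using cells_below_next[OF n0(1) n(1) n0(2)] qy qc by simp
  then show ?thesis using reading_word_nth[OF n0(1)] n0 Tc by simp
qed

lemma pending_iff_before_first_plus:
  assumes G: "mid_stage b m c T" and c1: "1 \<le> c" and cm: "c \<le> m"
    and n: "n < length (cells r l)"
  defines "w \<equiv> reading_word r l T"
  defines "L \<equiv> length (takeWhile (\<lambda>a. a \<noteq> c) w)"
  shows "cells r l ! n \<in> pending c T \<longleftrightarrow> n < L \<and> w ! n = Suc c"
proof
  assume pend: "cells r l ! n \<in> pending c T"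
  have len: "length w = length (cells r l)" unfolding w_def by (rule length_reading_word)
  have "n < L"
  proof (cases "L < length w")
    case True
    then have "w ! L = c" unfolding L_def using nth_length_takeWhile by fastforce
    then show ?thesis
      using pending_read_before_plus[OF G cm n pend, of L] True len unfolding w_def by simp
  qed (use n len L_def length_takeWhile_le in simp)
  moreover have "w ! n = Suc c"
    using pend reading_word_nth[OF n, of T] unfolding w_def pending_def by (auto simp: case_prod_beta)
  ultimately show "n < L \<and> w ! n = Suc c" by simp
next
  assume a: "n < L \<and> w ! n = Suc c"
  show "cells r l ! n \<in> pending c T"
  proof (rule ccontr)
    assume "cells r l ! n \<notin> pending c T"
    then have "0 < n" "w ! (n - 1) = c"
      using unpending_follows_plus[OF G c1 cm n] a unfolding w_def by auto
    moreover have "n - 1 < L" using a by (simp add: less_imp_diff_less)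
    ultimately show False using takeWhile_length_nth[of "n - 1" "\<lambda>a. a \<noteq> c" w] unfolding L_def by simp
  qed
qed

text \<open>The signature rule on a mid-stage: e_c acts on the pending box read last, since every
  letter c+1 from position L on is cancelled by the c directly before it.\<close>
lemma e_pos_mid_stage:
  assumes G: "mid_stage b m c T" and c1: "1 \<le> c" and cm: "c \<le> m"
  shows "\<exists>ms. e_pos c (reading_word r l T) = (if ms = [] then None else Some (last ms)) \<and>
     sorted ms \<and> (\<forall>n. n \<in> set ms \<longleftrightarrow> n < length (cells r l) \<and> cells r l ! n \<in> pending c T)"
proof -
  define w where "w = reading_word r l T"
  define L where "L = length (takeWhile (\<lambda>a. a \<noteq> c) w)"
  note pending_iff = pending_iff_before_first_plus[OF G c1 cm, folded w_def]
  have len: "length w = length (cells r l)" unfolding w_def by (rule length_reading_word)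
  have L: "L \<le> length w" unfolding L_def by (rule length_takeWhile_le)
  have before_L: "w ! p \<noteq> c" if "p < L" for p
    using takeWhile_length_nth[of p "\<lambda>a. a \<noteq> c" w] that unfolding L_def by simp
  have paired: "L < q \<and> w ! (q - 1) = c" if "L \<le> q" "q < length w" "w ! q = Suc c" for q
  proof -
    have "cells r l ! q \<notin> pending c T" using pending_iff[of q] that len by (auto simp: L_def)
    then have q: "0 < q" "w ! (q - 1) = c"
      using unpending_follows_plus[OF G c1 cm] that len unfolding w_def by auto
    then have "L \<le> q - 1" using before_L[of "q - 1"] by (meson not_le)
    then show ?thesis using q by simp
  qed
  define ms where "ms = filter (\<lambda>p. w ! p = Suc c) [0..<L]"
  have "e_pos c w = (if ms = [] then None else Some (last ms))"
    using e_pos_split[OF L before_L paired] unfolding ms_def Let_def .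
  moreover have "sorted ms" unfolding ms_def by (rule sorted_wrt_filter) simp
  moreover have "n \<in> set ms \<longleftrightarrow> n < length (cells r l) \<and> cells r l ! n \<in> pending c T" for n
    using pending_iff[of n] L len unfolding ms_def by (auto simp: L_def)
  ultimately show ?thesis unfolding w_def by blast
qed

lemma e_tab_mid_stage_None:
  assumes "mid_stage b m c T" "1 \<le> c" "c \<le> m" "pending c T = {}"
  shows "e_tab r l c T = None"
proof -
  obtain ms where ms: "e_pos c (reading_word r l T) = (if ms = [] then None else Some (last ms))"
    "\<forall>n. n \<in> set ms \<longleftrightarrow> n < length (cells r l) \<and> cells r l ! n \<in> pending c T"
    using e_pos_mid_stage[OF assms(1-3)] by blast
  have "ms = []" using ms(2) assms(4) by (cases ms) auto
  then show ?thesis unfolding e_tab_def using ms(1) by simp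
qed

lemma e_tab_mid_stage_Some:
  assumes G: "mid_stage b m c T" and c1: "1 \<le> c" and cm: "c \<le> m" and M: "pending c T \<noteq> {}"
  shows "\<exists>a x0. (a, x0) \<in> pending c T \<and>
           (\<forall>q y. (q, y) \<in> pending c T \<longrightarrow> (q, y) \<noteq> (a, x0) \<longrightarrow> x0 < y) \<and>
           e_tab r l c T = Some (T(a := (T a)(x0 := c)))"
proof -
  obtain ms where ms: "e_pos c (reading_word r l T) = (if ms = [] then None else Some (last ms))"
    "sorted ms" "\<forall>n. n \<in> set ms \<longleftrightarrow> n < length (cells r l) \<and> cells r l ! n \<in> pending c T"
    using e_pos_mid_stage[OF G c1 cm] by blast
  obtain p x where px: "(p, x) \<in> pending c T" using M by auto
  then obtain n where "n < length (cells r l)" "cells r l ! n = (p, x)"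
    using cell_index unfolding pending_def by auto
  then have "n \<in> set ms" using ms(3) px by simp
  then have ms_ne: "ms \<noteq> []" by auto
  then have "last ms \<in> set ms" by simp
  then have last_ms: "last ms < length (cells r l)" "cells r l ! last ms \<in> pending c T"
    using ms(3) by blast+
  obtain a x0 where ax: "cells r l ! last ms = (a, x0)" by force
  have a_pending: "(a, x0) \<in> pending c T" using last_ms ax by simp
  have leftmost: "x0 < y" if qM: "(q, y) \<in> pending c T" and ne: "(q, y) \<noteq> (a, x0)" for q y
  proof -
    have cq: "is_cell l q y" "T q y = Suc c" using qM unfolding pending_def by auto
    obtain n where n: "n < length (cells r l)" "cells r l ! n = (q, y)"
      using cell_index[OF cq(1)] by blast
    then have "n \<in> set ms" using ms(3) qM by simp
    then have "n \<le> last ms" using ms(2) sorted_le_last by blast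
    moreover have "n \<noteq> last ms" using n ax ne by auto
    ultimately have "read_before (q, y) (a, x0)"
      using cells_read_before[OF _ last_ms(1)] n ax by (metis le_neq_implies_less)
    then consider "x0 < y" | "y = x0" "q < a" unfolding read_before_def by auto
    then show "x0 < y"
    proof cases
      case 2
      have "1 \<le> q" using cq(1) unfolding is_cell_def by simp
      then have "T q x0 < T a x0"
        using ssyt_col_strict[OF mid_stageD(1)[OF G], of a x0 q] a_pending 2
        unfolding pending_def by simp
      then show ?thesis using 2 cq a_pending unfolding pending_def by simp
    qed
  qed
  moreover have "e_tab r l c T = Some (T(a := (T a)(x0 := c)))"
    unfolding e_tab_def ms(1) using ms_ne ax by simp
  ultimately show ?thesis using a_pending by blast
qed

text \<open>Lowering the leftmost pending box keeps the tableau semistandard: the box to its left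
  is not pending, hence \<le> c, and the box above it carries its row index, hence < c.\<close>
lemma lower_pending_ssyt:
  assumes G: "mid_stage b m c T" and c1: "1 \<le> c" and cm: "c \<le> m" and mr: "m \<le> r"
    and a_pending: "(a, x0) \<in> pending c T"
    and leftmost: "\<And>q y. (q, y) \<in> pending c T \<Longrightarrow> (q, y) \<noteq> (a, x0) \<Longrightarrow> x0 < y"
  defines "T' \<equiv> T(a := (T a)(x0 := c))"
  shows "T' \<in> SSYT r l"
proof -
  note TS = mid_stageD(1)[OF G]
  have ca: "is_cell l a x0" "a \<le> c" "T a x0 = Suc c" using a_pending unfolding pending_def by auto
  have T'v: "\<And>p x. T' p x = (if p = a \<and> x = x0 then c else T p x)" unfolding T'_def by simp
  show ?thesis unfolding SSYT_def
  proof (rule CollectI, intro conjI; intro allI impI)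
    fix i x assume "is_cell l i x"
    then show "1 \<le> T' i x \<and> T' i x \<le> r + 1" using ssyt_range[OF TS] c1 cm mr T'v by auto
  next
    fix i x assume "\<not> is_cell l i x"
    then show "T' i x = 0" using ssyt_zero[OF TS] ca T'v by auto
  next
    fix i x assume a: "is_cell l i (Suc x) \<and> 1 \<le> x"
    have cx: "is_cell l i x" using a cell_left by auto
    have base: "T i x \<le> T i (Suc x)" using ssyt_row_mono[OF TS, of i "Suc x" x] a by simp
    show "T' i x \<le> T' i (Suc x)"
    proof (cases "i = a \<and> Suc x = x0")
      case True
      have "(a, x) \<notin> pending c T" using leftmost[of a x] True by auto
      then have "T a x \<noteq> Suc c" using cx True ca unfolding pending_def by auto
      moreover have "T a x \<le> T a x0" using base True by simp
      ultimately have "T a x \<le> c" using ca by simp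
      then show ?thesis using True T'v by auto
    qed (use T'v base ca in auto)
  next
    fix i x assume a: "is_cell l (Suc i) x \<and> 1 \<le> i"
    have cx: "is_cell l i x" using a cell_up[of "Suc i" x i] by auto
    have base: "T i x < T (Suc i) x" using ssyt_col_strict[OF TS, of "Suc i" x i] a by simp
    show "T' i x < T' (Suc i) x"
    proof (cases "Suc i = a \<and> x = x0")
      case True
      have le: "T i x \<le> Suc m" "i \<le> c" using base True ca cm by auto
      have "T i x \<noteq> c"
        using mid_stageD(6)[OF G cx ca(1) le(2) ca(2)] ca True by auto
      then have "T i x = i" using mid_stageD(4)[OF G cx le] base True ca by auto
      then show ?thesis using True T'v ca by auto
    qed (use T'v base ca in auto)
  qed
qed

lemma lower_pending_mid_stage:
  assumes G: "mid_stage b m c T" and c1: "1 \<le> c" and cm: "c \<le> m" and mr: "m \<le> r"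
    and a_pending: "(a, x0) \<in> pending c T"
    and leftmost: "\<And>q y. (q, y) \<in> pending c T \<Longrightarrow> (q, y) \<noteq> (a, x0) \<Longrightarrow> x0 < y"
  defines "T' \<equiv> T(a := (T a)(x0 := c))"
  shows "mid_stage b m c T'" and "pending c T' = pending c T - {(a, x0)}"
proof -
  note st = mid_stageD[OF G]
  have ca: "is_cell l a x0" "a \<le> c" "T a x0 = Suc c" using a_pending unfolding pending_def by auto
  have T'v: "\<And>p x. T' p x = (if p = a \<and> x = x0 then c else T p x)" unfolding T'_def by simp
  show "mid_stage b m c T'" unfolding mid_stage_def
  proof (intro conjI allI impI)
    show "T' \<in> SSYT r l" unfolding T'_def by (rule lower_pending_ssyt[OF assms(1-6)])
    show "untouched_above b m T'"
      unfolding T'_def using untouched_above_update[OF st(2)] ca(3) cm by simp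
  next
    fix p x assume "is_cell l p x" "T' p x \<le> Suc m" "c < p"
    then show "T' p x = p" using st(3) T'v ca by (cases "p = a \<and> x = x0") auto
  next
    fix p x assume "is_cell l p x" "T' p x \<le> Suc m" "p \<le> c"
    then show "T' p x = p \<or> T' p x = c \<or> T' p x = Suc c" using st(4) T'v by (cases "p = a \<and> x = x0") auto
  next
    fix p x assume a: "is_cell l p x" "T' p x \<le> Suc m" "p < c"
    show "(T' p x = c \<or> T' p x = Suc c) = (b p x = Suc m)"
    proof (cases "p = a \<and> x = x0")
      case True
      then show ?thesis using st(5)[of a x0] ca cm a T'v by auto
    next
      case False
      then have "T' p x = T p x" using T'v by auto
      then show ?thesis using st(5)[OF a(1) _ a(3)] a(2) by simp
    qed
  next
    fix p x q y assume a: "is_cell l p x" "is_cell l q y" "p \<le> c" "q \<le> c" "T' p x = c" "T' q y = Suc c"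
    have q_ne: "\<not> (q = a \<and> y = x0)" using a T'v by auto
    then have Tq: "T q y = Suc c" using a T'v by auto
    then have "(q, y) \<in> pending c T" using a unfolding pending_def by auto
    show "x < y"
    proof (cases "p = a \<and> x = x0")
      case True
      then show ?thesis using leftmost[OF \<open>(q, y) \<in> pending c T\<close>] q_ne by auto
    next
      case False
      then show ?thesis using st(6)[OF a(1-4)] a(5) T'v Tq by auto
    qed
  qed
  show "pending c T' = pending c T - {(a, x0)}" unfolding pending_def using T'v by auto
qed

lemma e_string_mid_stage:
  assumes "mid_stage b m c T" "1 \<le> c" "c \<le> m" "m \<le> r"
  shows "\<exists>T'. e_pow r l c (card (pending c T)) T = Some T' \<and> mid_stage b m c T' \<and>
           pending c T' = {} \<and> e_pow r l c (Suc (card (pending c T))) T = None"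
  using assms(1)
proof (induction "card (pending c T)" arbitrary: T)
  case 0
  then have "pending c T = {}" using finite_pending by simp
  then show ?case using 0 e_tab_mid_stage_None[OF 0(2) assms(2,3)] by simp
next
  case (Suc N)
  then have "pending c T \<noteq> {}" by auto
  from e_tab_mid_stage_Some[OF Suc(3) assms(2,3) this] obtain a x0 where
    ax: "(a, x0) \<in> pending c T" "\<And>q y. (q, y) \<in> pending c T \<Longrightarrow> (q, y) \<noteq> (a, x0) \<Longrightarrow> x0 < y"
       "e_tab r l c T = Some (T(a := (T a)(x0 := c)))" by blast
  define T1 where "T1 = T(a := (T a)(x0 := c))"
  have T1: "mid_stage b m c T1" "pending c T1 = pending c T - {(a, x0)}"
    using lower_pending_mid_stage[OF Suc(3) assms(2-4) ax(1)] ax(2) unfolding T1_def by blast+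
  have N: "N = card (pending c T1)" using T1(2) ax(1) Suc(2) finite_pending by simp
  obtain T' where T': "e_pow r l c N T1 = Some T'" "mid_stage b m c T'" "pending c T' = {}"
      "e_pow r l c (Suc N) T1 = None"
    using Suc(1)[OF N T1(1)] unfolding N[symmetric] by blast
  have "e_pow r l c (Suc n) T = e_pow r l c n T1" for n
    unfolding e_pow_Suc_inner ax(3) T1_def by simp
  then show ?case unfolding Suc(2)[symmetric] using T' by metis
qed

lemma e_string_stage:
  assumes "mid_stage b m c T" "1 \<le> c" "c \<le> m" "m \<le> r"
  shows "stage b m (c - 1) (the (e_pow r l c (eps r l c T) T))"
proof -
  obtain T' where T': "e_pow r l c (card (pending c T)) T = Some T'" "mid_stage b m c T'"
      "pending c T' = {}" "e_pow r l c (Suc (card (pending c T))) T = None"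
    using e_string_mid_stage[OF assms] by blast
  have "eps r l c T = card (pending c T)"
    unfolding eps_def
  proof (rule Greatest_equality)
    show "e_pow r l c (card (pending c T)) T \<noteq> None" using T' by simp
    fix y assume "e_pow r l c y T \<noteq> None"
    then show "y \<le> card (pending c T)"
      using e_pow_None_mono[OF T'(4), of y] by (cases "y \<le> card (pending c T)") auto
  qed
  then show ?thesis using T' mid_stage_done[OF T'(2,3) assms(2)] by simp
qed

lemma block_stage:
  "stage b m c T \<Longrightarrow> i \<le> c \<Longrightarrow> c \<le> m \<Longrightarrow> m \<le> r \<Longrightarrow>
     stage b m i (snd (bzl r l (rev [Suc i..<Suc c]) T))"
proof (induction c arbitrary: T)
  case (Suc c)
  show ?case
  proof (cases "i = Suc c")
    case False
    then have ic: "i \<le> c" using Suc by simp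
    have word: "rev [Suc i..<Suc (Suc c)] = Suc c # rev [Suc i..<Suc c]" using ic by simp
    have "mid_stage b m (Suc c) T" using stage_mid_stage Suc by simp
    then have "stage b m c (the (e_pow r l (Suc c) (eps r l (Suc c) T) T))"
      using e_string_stage[of b m "Suc c" T] Suc by simp
    then show ?thesis unfolding word snd_bzl_Cons using Suc.IH ic Suc by simp
  qed (use Suc in simp)
qed simp

lemma stage_after_blocks:
  "b \<in> SSYT r l \<Longrightarrow> m \<le> r \<Longrightarrow> stage b m 0 (snd (bzl r l (long_word m) b))"
proof (induction m)
  case 0 then show ?case using stage_start by (simp add: long_word_def)
next
  case (Suc m)
  then have "stage b (Suc m) (Suc m) (snd (bzl r l (long_word m) b))"
    using stage_next_block by simp
  from block_stage[OF this, of 0] Suc(3) show ?case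
    unfolding long_word_Suc snd_bzl_append by simp
qed

lemma stage_before_position:
  assumes "b \<in> SSYT r l" "1 \<le> i" "i \<le> j" "j \<le> r" "k = j * (j - 1) div 2 + (j - i + 1)"
  shows "stage b j i (snd (bzl r l (take (k - 1) (long_word r)) b))"
proof -
  have "stage b (j - 1) 0 (snd (bzl r l (long_word (j - 1)) b))"
    using stage_after_blocks assms by simp
  then have "stage b j j (snd (bzl r l (long_word (j - 1)) b))"
    using stage_next_block assms by fastforce
  then show ?thesis
    unfolding take_long_word[OF assms(2-5)] snd_bzl_append using block_stage assms by simp
qed

lemma stage_row_own:
  assumes st: "stage b j i T" and "i \<le> j" and cell: "is_cell l i x"
  shows "T i x = i \<longleftrightarrow> b i x \<le> j"
proof
  assume T: "T i x = i"
  then have "b i x \<le> Suc j" using untouched_aboveD(1)[OF stageD(2)[OF st] cell] assms(2) by fastforce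
  moreover have "b i x \<noteq> Suc j" using stageD(5)[OF st cell] T assms(2) by auto
  ultimately show "b i x \<le> j" by simp
next
  assume "b i x \<le> j"
  moreover from this have "T i x \<le> Suc j" using untouched_aboveD(2)[OF stageD(2)[OF st] cell] by simp
  ultimately show "T i x = i" using stageD(4,5)[OF st cell] by fastforce
qed

lemma stage_row_next:
  assumes st: "stage b j i T" and "i \<le> j" and cell: "is_cell l (Suc i) x"
  shows "T (Suc i) x = Suc i \<longleftrightarrow> b (Suc i) x \<le> Suc j"
proof
  assume "T (Suc i) x = Suc i"
  then show "b (Suc i) x \<le> Suc j"
    using untouched_aboveD(1)[OF stageD(2)[OF st] cell] assms(2) by fastforce
next
  assume "b (Suc i) x \<le> Suc j"
  then have "T (Suc i) x \<le> Suc j" using untouched_aboveD(2)[OF stageD(2)[OF st] cell] by simp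
  then show "T (Suc i) x = Suc i" using stageD(3)[OF st cell] by simp
qed

text \<open>The first identity: row i has l_i boxes, of which b_{i,j} have b-entry > j and the
  rest are the i-boxes of T.\<close>
lemma boxes_row_own:
  assumes "stage b j i T" "1 \<le> i" "i \<le> j" "j \<le> r"
  shows "int (l i) - int (bb r l b i j) = int (boxes_in_row l T i i)"
proof -
  have "{x. 1 \<le> x \<and> x \<le> l i \<and> T i x = i} = {x. 1 \<le> x \<and> x \<le> l i \<and> \<not> j + 1 \<le> b i x}"
    using stage_row_own[OF assms(1,3)] assms(2) unfolding is_cell_def by fastforce
  moreover have "bb r l b i j = card {x. 1 \<le> x \<and> x \<le> l i \<and> j + 1 \<le> b i x}"
    unfolding bb_def using assms by simp
  ultimately show ?thesis
    using card_row_split[of "l i" "\<lambda>x. j + 1 \<le> b i x"] unfolding boxes_in_row_def by simp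
qed

text \<open>The second identity, likewise for row i+1 (trivially true when row i+1 is beyond r,
  and with no boxes above j+1 when j = r).\<close>
lemma boxes_row_next:
  assumes "b \<in> SSYT r l" "stage b j i T" "i \<le> j" "j \<le> r"
  shows "int (l (i + 1)) - int (bb r l b (i + 1) (j + 1)) = int (boxes_in_row l T (i + 1) (i + 1))"
proof -
  have own: "{x. 1 \<le> x \<and> x \<le> l (Suc i) \<and> T (Suc i) x = Suc i}
      = {x. 1 \<le> x \<and> x \<le> l (Suc i) \<and> \<not> Suc j + 1 \<le> b (Suc i) x}"
    using stage_row_next[OF assms(2,3)] unfolding is_cell_def by fastforce
  consider "i = r" | "i < r" "j = r" | "j < r" using assms(3,4) by linarith
  then show ?thesis
  proof cases
    case 1
    then show ?thesis using row_vanish[of "i + 1"] unfolding boxes_in_row_def bb_def by simp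
  next
    case 2
    have "\<not> Suc j + 1 \<le> b (Suc i) x" if "1 \<le> x" "x \<le> l (Suc i)" for x
      using ssyt_range[OF assms(1), of "Suc i" x] that 2 unfolding is_cell_def by simp
    then have "{x. 1 \<le> x \<and> x \<le> l (Suc i) \<and> T (Suc i) x = Suc i} = {1..l (Suc i)}"
      unfolding own by auto
    then show ?thesis using 2 unfolding boxes_in_row_def bb_def by simp
  next
    case 3
    have "bb r l b (i + 1) (j + 1) = card {x. 1 \<le> x \<and> x \<le> l (Suc i) \<and> Suc j + 1 \<le> b (Suc i) x}"
      unfolding bb_def using 3 assms(3) by simp
    then show ?thesis using own card_row_split[of "l (Suc i)" "\<lambda>x. Suc j + 1 \<le> b (Suc i) x"]
      unfolding boxes_in_row_def by simp
  qed
qed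

end

theorem mainTheorem3:
  fixes r :: nat and lam :: "nat \<Rightarrow> nat" and b :: tab and i j k :: nat
  assumes "1 \<le> r"
    and "b \<in> SSYT r (shape r lam)"
    and "1 \<le> i" and "i \<le> j" and "j \<le> r"
    and "k = j * (j - 1) div 2 + (j - i + 1)"
  shows "let l = shape r lam; b' = snd (bzl r l (take (k - 1) (long_word r)) b) in
           int (l i) - int (bb r l b i j) = int (boxes_in_row l b' i i) \<and>
           int (l (i + 1)) - int (bb r l b (i + 1) (j + 1)) = int (boxes_in_row l b' (i + 1) (i + 1))"
proof -
  interpret young_shape r "shape r lam" by (rule young_shape_shape)
  define b' where "b' = snd (bzl r (shape r lam) (take (k - 1) (long_word r)) b)"
  have "stage b j i b'" unfolding b'_def using stage_before_position assms(2-6) by blast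
  then show ?thesis
    using boxes_row_own boxes_row_next assms(2-5) unfolding b'_def Let_def by blast
qed

end
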